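(* The disjoint union of countably infinitely many isomorphic copies of a finite relational structure is unary FA-presentable.
   Context: The disjoint union of structures $\mathcal{S}^{(i)}=(S^{(i)},\sigma^{(i)}_1,\dots,\sigma^{(i)}_n)$ of the same signature, $i\in I$, is $(\bigsqcup_i S^{(i)},\bigsqcup_i\sigma^{(i)}_1,\dots,\bigsqcup_i\sigma^{(i)}_n)$. A relational structure $(S,R_1,\dots,R_n)$ is unary FA-presentable if there exist a regular language $L\subseteq a^*$ over a one-letter alphabet and a surjection $\phi:L\to S$ such that for each relation $R\in\{=,R_1,\dots,R_n\}$ of arity $r$, the set $\{(w_1,\dots,w_r)\in L^r: R(w_1\phi,\dots,w_r\phi)\}$ is regular, meaning that the set of words $\mathrm{conv}(w_1,\dots,w_r)$ over $\{a,\$\}^r$ (reading the $w_i$ in parallel, shorter words padded by $\$$) is a regular language. *)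

theory Defs
  imports Main "HOL-Library.Countable_Set"
begin

datatype sym = A | Dollar

text \<open>Letters not occurring in the language are
  irrelevant, so this coincides with regularity over any finite alphabet containing
  the letters used.\<close>
definition regular :: "'c list set \<Rightarrow> bool" where
  "regular L \<longleftrightarrow> (\<exists>(Q :: nat set) (\<delta> :: nat \<Rightarrow> 'c \<Rightarrow> nat) q0 F.
      finite Q \<and> q0 \<in> Q \<and> (\<forall>q\<in>Q. \<forall>c. \<delta> q c \<in> Q) \<and> F \<subseteq> Q \<and>
      L = {w. foldl \<delta> q0 w \<in> F})"

text \<open>Convolution of an r-tuple of words: read in parallel, shorter words padded by Dollar.
  Each letter is an r-tuple (list of length r) of symbols.\<close>
definition conv :: "sym list list \<Rightarrow> sym list list" where
  "conv ws = map (\<lambda>j. map (\<lambda>w. if j < length w then w ! j else Dollar) ws)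
                 [0..<foldr max (map length ws) 0]"

definition rel_structure :: "'u set \<Rightarrow> nat list \<Rightarrow> 'u list set list \<Rightarrow> bool" where
  "rel_structure S ar Rs \<longleftrightarrow> length Rs = length ar \<and>
     (\<forall>k<length ar. \<forall>t\<in>Rs ! k. length t = ar ! k \<and> set t \<subseteq> S)"

definition rel_iso :: "('u \<Rightarrow> 'v) \<Rightarrow> 'u set \<Rightarrow> 'u list set list \<Rightarrow> 'v set \<Rightarrow> 'v list set list \<Rightarrow> bool" where
  "rel_iso f S Rs S' Rs' \<longleftrightarrow> bij_betw f S S' \<and> length Rs = length Rs' \<and>
     (\<forall>k<length Rs. \<forall>t. set t \<subseteq> S \<longrightarrow> (t \<in> Rs ! k \<longleftrightarrow> map f t \<in> Rs' ! k))"

definition disj_union_univ :: "'i set \<Rightarrow> ('i \<Rightarrow> 'v set) \<Rightarrow> ('i \<times> 'v) set" where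
  "disj_union_univ I S = Sigma I S"

definition disj_union_rels :: "'i set \<Rightarrow> nat \<Rightarrow> ('i \<Rightarrow> 'v list set list) \<Rightarrow> ('i \<times> 'v) list set list" where
  "disj_union_rels I m Rs = map (\<lambda>k. {t. \<exists>i\<in>I. (\<forall>x\<in>set t. fst x = i) \<and> map snd t \<in> Rs i ! k}) [0..<m]"

definition unary_FA_presentable :: "'u set \<Rightarrow> nat list \<Rightarrow> 'u list set list \<Rightarrow> bool" where
  "unary_FA_presentable S ar Rs \<longleftrightarrow> (\<exists>(L :: sym list set) (\<phi> :: sym list \<Rightarrow> 'u).
     (\<forall>w\<in>L. set w \<subseteq> {A}) \<and> regular L \<and> \<phi> ` L = S \<and>
     regular {conv [w1, w2] | w1 w2. w1 \<in> L \<and> w2 \<in> L \<and> \<phi> w1 = \<phi> w2} \<and>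
     (\<forall>k<length ar. regular {conv ws | ws. length ws = ar ! k \<and> set ws \<subseteq> L \<and> map \<phi> ws \<in> Rs ! k}))"

end

theory Submission
  imports Defs
begin

text \<open>Element x of the q-th copy of a structure on {0..<n} is encoded by the unary word
  a^(q*n + x). Convolving a tuple from copy q whose residues form the list p yields
  q*n + min p columns consisting of a's only, followed by a tail that depends on p alone and
  contains no such column. Hence every relation becomes a finite union of languages
  {u^c t | c = min p (mod n)} with u not occurring in t; each of them has only finitely many
  left quotients and is therefore regular (Myhill--Nerode). A countably infinite disjoint
  union of copies of a finite structure is isomorphic to this standard one, and
  presentations transfer along isomorphisms.\<close>

definition quotients :: "'c list set \<Rightarrow> 'c list set set" where
  "quotients L = range (\<lambda>w. {v. w @ v \<in> L})"

lemma regular_if_finite_quotients: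
  fixes L :: "'c list set"
  assumes "finite (quotients L)"
  shows "regular L"
proof -
  let ?B = "quotients L"
  define enc :: "'c list set \<Rightarrow> nat" where "enc = to_nat_on ?B"
  have inj: "inj_on enc ?B"
    using assms by (simp add: enc_def countable_finite inj_on_to_nat_on)
  have mem: "{v. w @ v \<in> L} \<in> ?B" for w
    by (auto simp: quotients_def)
  define \<delta> where "\<delta> q c = enc {v. c # v \<in> inv_into ?B enc q}" for q c
  have step: "\<delta> (enc {v. w @ v \<in> L}) c = enc {v. (w @ [c]) @ v \<in> L}" for w c
    by (simp add: \<delta>_def inv_into_f_f[OF inj mem])
  have run: "foldl \<delta> (enc L) w = enc {v. w @ v \<in> L}" for w
    by (induction w rule: rev_induct) (simp_all add: step)
  show ?thesis
    unfolding regular_def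
  proof (intro exI conjI)
    show "finite (enc ` ?B)" "enc L \<in> enc ` ?B" "enc ` {Q \<in> ?B. [] \<in> Q} \<subseteq> enc ` ?B"
      using assms mem[of "[]"] by auto
    show "\<forall>q\<in>enc ` ?B. \<forall>c. \<delta> q c \<in> enc ` ?B"
    proof (intro ballI allI)
      fix q c assume "q \<in> enc ` ?B"
      then obtain w where "q = enc {v. w @ v \<in> L}"
        by (auto simp: quotients_def)
      then show "\<delta> q c \<in> enc ` ?B"
        using step mem by blast
    qed
    have "enc {v. w @ v \<in> L} \<in> enc ` {Q \<in> ?B. [] \<in> Q} \<longleftrightarrow> w \<in> L" for w
      using inj_on_image_mem_iff[OF inj mem[of w], of "{Q \<in> ?B. [] \<in> Q}"] mem[of w] by simp
    then show "L = {w. foldl \<delta> (enc L) w \<in> enc ` {Q \<in> ?B. [] \<in> Q}}"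
      unfolding run by blast
  qed
qed

lemma finite_quotients_if_finite:
  assumes "finite L"
  shows "finite (quotients L)"
proof -
  let ?suffixes = "\<Union>u\<in>L. (\<lambda>j. drop j u) ` {..length u}"
  have "{v. w @ v \<in> L} \<subseteq> ?suffixes" for w
  proof
    fix v assume "v \<in> {v. w @ v \<in> L}"
    moreover have "v = drop (length w) (w @ v)" "length w \<le> length (w @ v)" by simp_all
    ultimately show "v \<in> ?suffixes" by blast
  qed
  then have "quotients L \<subseteq> Pow ?suffixes"
    by (auto simp: quotients_def)
  then show ?thesis
    by (rule finite_subset) (use assms in simp)
qed

lemma regular_if_finite: "finite L \<Longrightarrow> regular L"
  by (simp add: regular_if_finite_quotients finite_quotients_if_finite)

lemma finite_quotients_Un:
  assumes "finite (quotients L1)" "finite (quotients L2)"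
  shows "finite (quotients (L1 \<union> L2))"
proof -
  have "{v. w @ v \<in> L1 \<union> L2} = (\<lambda>(Q1, Q2). Q1 \<union> Q2) ({v. w @ v \<in> L1}, {v. w @ v \<in> L2})" for w
    by auto
  then have "quotients (L1 \<union> L2) \<subseteq> (\<lambda>(Q1, Q2). Q1 \<union> Q2) ` (quotients L1 \<times> quotients L2)"
    unfolding quotients_def by blast
  then show ?thesis
    by (rule finite_subset) (use assms in simp)
qed

lemma finite_quotients_UN:
  assumes "finite T" "\<And>p. p \<in> T \<Longrightarrow> finite (quotients (X p))"
  shows "finite (quotients (\<Union>p\<in>T. X p))"
  using assms
  by (induction T rule: finite_induct) (simp_all add: finite_quotients_if_finite finite_quotients_Un)

lemma replicate_append_eq_replicate_appendD:
  assumes "replicate k a @ v = replicate c a @ t" "a \<notin> set t"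
  shows "k \<le> c \<and> v = replicate (c - k) a @ t"
  using assms
proof (induction k arbitrary: c)
  case (Suc k)
  then show ?case by (cases c) auto
qed simp

lemma obtain_replicate_prefix:
  obtains k s where "w = replicate k a @ s" "s = [] \<or> hd s \<noteq> a"
proof
  have "\<forall>y\<in>set (takeWhile ((=) a) w). y = a"
    by (auto dest: set_takeWhileD)
  then show "w = replicate (length (takeWhile ((=) a) w)) a @ dropWhile ((=) a) w"
    by (simp add: replicate_length_same)
  show "dropWhile ((=) a) w = [] \<or> hd (dropWhile ((=) a) w) \<noteq> a"
    using hd_dropWhile by metis
qed

lemma quotient_replicate_mod:
  assumes "a \<notin> set t"
  shows "{v. replicate k a @ v \<in> {replicate c a @ t | c. c mod N = m}} =
    {replicate c a @ t | c. (k + c) mod N = m}"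
proof (intro set_eqI iffI)
  fix v assume "v \<in> {v. replicate k a @ v \<in> {replicate c a @ t | c. c mod N = m}}"
  then obtain c where c: "replicate k a @ v = replicate c a @ t" "c mod N = m"
    by auto
  with replicate_append_eq_replicate_appendD[OF c(1) assms]
  have "v = replicate (c - k) a @ t" "(k + (c - k)) mod N = m"
    by simp_all
  then show "v \<in> {replicate c a @ t | c. (k + c) mod N = m}"
    by blast
next
  fix v assume "v \<in> {replicate c a @ t | c. (k + c) mod N = m}"
  then obtain c where "v = replicate c a @ t" "(k + c) mod N = m"
    by blast
  then have "replicate k a @ v = replicate (k + c) a @ t \<and> (k + c) mod N = m"
    by (simp add: replicate_add)
  then show "v \<in> {v. replicate k a @ v \<in> {replicate c a @ t | c. c mod N = m}}"
    by blast
qed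

lemma replicate_append_in_replicate_mod_iff:
  assumes "a \<notin> set t" "s \<noteq> []" "hd s \<noteq> a"
  shows "replicate k a @ s @ v \<in> {replicate c a @ t | c. c mod N = m} \<longleftrightarrow>
    s @ v = t \<and> k mod N = m"
proof
  assume "replicate k a @ s @ v \<in> {replicate c a @ t | c. c mod N = m}"
  then obtain c where c: "replicate k a @ s @ v = replicate c a @ t" "c mod N = m"
    by auto
  from replicate_append_eq_replicate_appendD[OF c(1) assms(1)]
  have "k \<le> c" and sv: "s @ v = replicate (c - k) a @ t"
    by simp_all
  have "c - k = 0"
  proof (rule ccontr)
    assume "c - k \<noteq> 0"
    then have "hd (s @ v) = a"
      unfolding sv by (cases "c - k") simp_all
    with assms(2,3) show False
      by simp
  qed
  with \<open>k \<le> c\<close> sv c(2) show "s @ v = t \<and> k mod N = m"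
    by simp
qed blast

lemma finite_quotients_replicate_mod:
  assumes "a \<notin> set t" "N > 0"
  shows "finite (quotients {replicate c a @ t | c. c mod N = m})"
    (is "finite (quotients ?X)")
proof -
  define shifted where "shifted r = {replicate c a @ t | c. (r + c) mod N = m}" for r
  have "{v. w @ v \<in> ?X} \<in> shifted ` {..<N} \<union> (\<lambda>j. {drop j t}) ` {..length t} \<union> {{}}" for w
  proof -
    obtain k s where w: "w = replicate k a @ s" and s: "s = [] \<or> hd s \<noteq> a"
      by (rule obtain_replicate_prefix)
    show ?thesis
    proof (cases "s = []")
      case True
      have "shifted k = shifted (k mod N)"
        unfolding shifted_def by (simp add: mod_add_left_eq)
      then show ?thesis
        using True w quotient_replicate_mod[OF assms(1)] assms(2)
        by (simp add: shifted_def[symmetric])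
    next
      case False
      then have quotient: "w @ v \<in> ?X \<longleftrightarrow> s @ v = t \<and> k mod N = m" for v
        using w s replicate_append_in_replicate_mod_iff[OF assms(1)] by simp
      show ?thesis
      proof (cases "\<exists>v. s @ v = t \<and> k mod N = m")
        case True
        then obtain v0 where "s @ v0 = t" "k mod N = m"
          by blast
        then have "{v. w @ v \<in> ?X} = {drop (length s) t}" "length s \<le> length t"
          unfolding quotient by auto
        then show ?thesis
          by simp
      next
        case False
        then have "{v. w @ v \<in> ?X} = {}"
          unfolding quotient by blast
        then show ?thesis
          by simp
      qed
    qed
  qed
  then have "quotients ?X \<subseteq> shifted ` {..<N} \<union> (\<lambda>j. {drop j t}) ` {..length t} \<union> {{}}"
    unfolding quotients_def by blast
  then show ?thesis
    by (rule finite_subset) simp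
qed

lemma foldr_max_map_add:
  "p \<noteq> [] \<Longrightarrow> foldr max (map (\<lambda>x. Q + x) p) 0 = Q + foldr max p (0::nat)"
  by (induction p rule: induct_list012) (auto simp: max_def)

lemma member_le_foldr_max: "x \<in> set p \<Longrightarrow> x \<le> foldr max p (0::nat)"
  by (induction p) auto

definition unary_conv_tail :: "nat list \<Rightarrow> sym list list" where
  "unary_conv_tail p =
     map (\<lambda>j. map (\<lambda>x. if j < x then A else Dollar) p) [Min (set p)..<foldr max p 0]"

lemma conv_replicate_shift:
  assumes "p \<noteq> []"
  shows "conv (map (\<lambda>x. replicate (Q + x) A) p) =
    replicate (Q + Min (set p)) (replicate (length p) A) @ unary_conv_tail p"
proof -
  let ?m = "Min (set p)" and ?M = "foldr max p (0::nat)"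
  have "?m \<le> ?M"
    using assms member_le_foldr_max[of ?m p] by simp
  have len: "foldr max (map length (map (\<lambda>x. replicate (Q + x) A) p)) 0 = Q + ?M"
    using foldr_max_map_add[OF assms] by (simp add: comp_def)
  have column: "map (\<lambda>w. if j < length w then w ! j else Dollar) (map (\<lambda>x. replicate (Q + x) A) p)
      = map (\<lambda>x. if j < Q + x then A else Dollar) p" for j
    by simp
  show ?thesis
    unfolding conv_def len column
  proof (rule nth_equalityI)
    fix j assume "j < length (map (\<lambda>j. map (\<lambda>x. if j < Q + x then A else Dollar) p) [0..<Q + ?M])"
    then have "j < Q + ?M" by simp
    show "map (\<lambda>j. map (\<lambda>x. if j < Q + x then A else Dollar) p) [0..<Q + ?M] ! j =
        (replicate (Q + ?m) (replicate (length p) A) @ unary_conv_tail p) ! j"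
    proof (cases "j < Q + ?m")
      case True
      then have "j < Q + x" if "x \<in> set p" for x
        using that by (meson Min_le List.finite_set add_le_cancel_left less_le_trans)
      then have "map (\<lambda>x. if j < Q + x then A else Dollar) p = replicate (length p) A"
        by (simp add: map_replicate_const[symmetric] cong: map_cong)
      with True \<open>j < Q + ?M\<close> show ?thesis
        by (simp add: nth_append)
    next
      case False
      with \<open>j < Q + ?M\<close> show ?thesis
        by (auto simp: nth_append unary_conv_tail_def intro!: map_cong)
    qed
  qed (use \<open>?m \<le> ?M\<close> in \<open>simp add: unary_conv_tail_def\<close>)
qed

lemma replicate_notin_unary_conv_tail:
  assumes "p \<noteq> []"
  shows "replicate (length p) A \<notin> set (unary_conv_tail p)"
proof
  assume "replicate (length p) A \<in> set (unary_conv_tail p)"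
  then obtain j where "Min (set p) \<le> j"
    and j: "replicate (length p) A = map (\<lambda>x. if j < x then A else Dollar) p"
    unfolding unary_conv_tail_def by auto
  obtain i where i: "i < length p" "p ! i = Min (set p)"
    using assms by (metis Min_in List.finite_set in_set_conv_nth set_empty)
  have "(if j < p ! i then A else Dollar) = A"
    using arg_cong[OF j, of "\<lambda>xs. xs ! i"] i(1) by simp
  with i(2) \<open>Min (set p) \<le> j\<close> show False
    by (simp split: if_splits)
qed

definition unary_block :: "nat \<Rightarrow> nat \<Rightarrow> nat \<Rightarrow> sym list" where
  "unary_block n q x = replicate (q * n + x) A"

definition unary_decode :: "nat \<Rightarrow> sym list \<Rightarrow> nat \<times> nat" where
  "unary_decode n w = (length w div n, length w mod n)"

lemma unary_decode_block: "x < n \<Longrightarrow> unary_decode n (unary_block n q x) = (q, x)"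
  by (simp add: unary_decode_def unary_block_def)

lemma unary_block_decode:
  "w \<in> range (\<lambda>c. replicate c A) \<Longrightarrow>
    unary_block n (fst (unary_decode n w)) (snd (unary_decode n w)) = w"
  by (auto simp: unary_decode_def unary_block_def)

lemma unary_decode_image:
  assumes "n > 0"
  shows "unary_decode n ` range (\<lambda>c. replicate c A) = UNIV \<times> {..<n}"
proof
  show "unary_decode n ` range (\<lambda>c. replicate c A) \<subseteq> UNIV \<times> {..<n}"
    using assms by (auto simp: unary_decode_def)
  show "UNIV \<times> {..<n} \<subseteq> unary_decode n ` range (\<lambda>c. replicate c A)"
  proof clarify
    fix q x :: nat assume "x < n"
    then have "(q, x) = unary_decode n (unary_block n q x)"
      by (simp add: unary_decode_block)
    then show "(q, x) \<in> unary_decode n ` range (\<lambda>c. replicate c A)"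
      by (simp add: unary_block_def)
  qed
qed

lemma regular_range_replicate: "regular (range (\<lambda>c. replicate c a))"
proof -
  have "range (\<lambda>c. replicate c a) = {replicate c a @ [] | c. c mod 1 = (0::nat)}"
    by auto
  then show ?thesis
    using finite_quotients_replicate_mod[of a "[]" 1 0] by (simp add: regular_if_finite_quotients)
qed

lemma range_conv_unary_block:
  assumes "p \<noteq> []" "set p \<subseteq> {..<n}"
  shows "range (\<lambda>q. conv (map (unary_block n q) p)) =
    {replicate c (replicate (length p) A) @ unary_conv_tail p | c. c mod n = Min (set p)}"
    (is "_ = ?pattern")
proof (intro set_eqI iffI)
  have "Min (set p) < n"
    using assms Min_in[of "set p"] by (simp add: subset_iff)
  fix w assume "w \<in> range (\<lambda>q. conv (map (unary_block n q) p))"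
  then obtain q where "w = replicate (q * n + Min (set p)) (replicate (length p) A) @ unary_conv_tail p"
    unfolding unary_block_def conv_replicate_shift[OF assms(1)] by blast
  moreover have "(q * n + Min (set p)) mod n = Min (set p)"
    using \<open>Min (set p) < n\<close> by simp
  ultimately show "w \<in> ?pattern"
    by blast
next
  fix w assume "w \<in> ?pattern"
  then obtain c where "w = replicate c (replicate (length p) A) @ unary_conv_tail p"
    and "c mod n = Min (set p)"
    by blast
  moreover have "c = c div n * n + c mod n"
    by simp
  ultimately have "w = conv (map (unary_block n (c div n)) p)"
    using conv_replicate_shift[OF assms(1)] unfolding unary_block_def by metis
  then show "w \<in> range (\<lambda>q. conv (map (unary_block n q) p))"
    by simp
qed

lemma regular_conv_blocks:
  assumes "n > 0" "finite T" "\<And>p. p \<in> T \<Longrightarrow> set p \<subseteq> {..<n}"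
  shows "regular {conv (map (unary_block n q) p) | q p. p \<in> T}"
proof -
  have "finite (quotients (range (\<lambda>q. conv (map (unary_block n q) p))))" if "p \<in> T" for p
  proof (cases "p = []")
    case True
    then show ?thesis
      by (simp add: conv_def finite_quotients_if_finite)
  next
    case False
    then show ?thesis
      unfolding range_conv_unary_block[OF False assms(3)[OF that]]
      by (rule finite_quotients_replicate_mod[OF replicate_notin_unary_conv_tail assms(1)])
  qed
  moreover have "{conv (map (unary_block n q) p) | q p. p \<in> T} =
      (\<Union>p\<in>T. range (\<lambda>q. conv (map (unary_block n q) p)))"
    by blast
  ultimately show ?thesis
    using assms(2) by (simp add: regular_if_finite_quotients finite_quotients_UN)
qed

lemma conv_unary_eq_pairs:
  "{conv [w1, w2] | w1 w2. w1 \<in> range (\<lambda>c. replicate c A) \<and> w2 \<in> range (\<lambda>c. replicate c A)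
      \<and> unary_decode n w1 = unary_decode n w2} = range (\<lambda>c. replicate c [A, A])"
    (is "?lhs = _")
proof -
  have conv_pair: "conv [replicate c A, replicate c A] = replicate c [A, A]" for c
    using conv_replicate_shift[of "[0, 0]" c] by (simp add: unary_conv_tail_def)
  have "?lhs = range (\<lambda>c. conv [replicate c A, replicate c A])"
  proof (intro set_eqI iffI)
    fix w assume "w \<in> ?lhs"
    then obtain c1 c2 where "w = conv [replicate c1 A, replicate c2 A]"
      and "unary_decode n (replicate c1 A) = unary_decode n (replicate c2 A)"
      by blast
    moreover from this have "replicate c1 A = replicate c2 A"
      using unary_block_decode by (metis rangeI)
    ultimately show "w \<in> range (\<lambda>c. conv [replicate c A, replicate c A])"
      by simp
  qed blast
  then show ?thesis
    by (simp add: conv_pair)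
qed

lemma conv_unary_copies_rel:
  assumes "n > 0"
  shows "{conv ws | ws. length ws = r \<and> set ws \<subseteq> range (\<lambda>c. replicate c A) \<and>
      map (unary_decode n) ws \<in> {t. \<exists>q. (\<forall>y\<in>set t. fst y = q) \<and> map snd t \<in> R}} =
    {conv (map (unary_block n q) p) | q p. p \<in> {p \<in> R. length p = r \<and> set p \<subseteq> {..<n}}}"
    (is "?lhs = ?rhs")
proof (intro set_eqI iffI)
  fix w assume "w \<in> ?lhs"
  then obtain ws q where ws: "w = conv ws" "length ws = r" "set ws \<subseteq> range (\<lambda>c. replicate c A)"
    and q: "\<forall>y\<in>set ws. fst (unary_decode n y) = q"
    and R: "map (snd \<circ> unary_decode n) ws \<in> R"
    by auto
  have "map (\<lambda>y. unary_block n q (snd (unary_decode n y))) ws = ws"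
    using ws(3) q unary_block_decode by (intro map_idI) (metis subsetD)
  then have "w = conv (map (unary_block n q) (map (snd \<circ> unary_decode n) ws))"
    using ws(1) by (simp add: comp_def)
  moreover have "set (map (snd \<circ> unary_decode n) ws) \<subseteq> {..<n}"
    using assms by (auto simp: unary_decode_def)
  ultimately show "w \<in> ?rhs"
    using ws(2) R
    by (intro CollectI exI[of _ q] exI[of _ "map (snd \<circ> unary_decode n) ws"]) simp
next
  fix w assume "w \<in> ?rhs"
  then obtain q p where w: "w = conv (map (unary_block n q) p)"
    and p: "p \<in> R" "length p = r" "set p \<subseteq> {..<n}"
    by blast
  have decode: "map (unary_decode n) (map (unary_block n q) p) = map (Pair q) p"
    using p(3) unary_decode_block by (auto intro!: map_cong)
  have "set (map (unary_block n q) p) \<subseteq> range (\<lambda>c. replicate c A)"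
    by (auto simp: unary_block_def)
  moreover have "map (unary_decode n) (map (unary_block n q) p) \<in>
      {t. \<exists>q. (\<forall>y\<in>set t. fst y = q) \<and> map snd t \<in> R}"
    unfolding decode using p(1) by (auto simp: comp_def)
  moreover have "length (map (unary_block n q) p) = r"
    using p(2) by simp
  ultimately show "w \<in> ?lhs"
    using w by blast
qed

lemma unary_FA_presentable_empty: "unary_FA_presentable {} ar Rs"
  unfolding unary_FA_presentable_def
  by (intro exI[of _ "{}"] exI[of _ "\<lambda>_. undefined"] conjI allI impI ballI)
    (auto simp: conv_def intro: regular_if_finite finite_subset[of _ "{[]}"])

lemma unary_FA_presentable_copies:
  "unary_FA_presentable (disj_union_univ (UNIV :: nat set) (\<lambda>_. {..<n :: nat})) ar
     (disj_union_rels UNIV (length ar) (\<lambda>_. Ts :: nat list set list))"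
proof (cases "n = 0")
  case True
  then show ?thesis
    using unary_FA_presentable_empty by (simp add: disj_union_univ_def)
next
  case False
  then have "n > 0"
    by simp
  let ?L = "range (\<lambda>c. replicate c A)"
  show ?thesis
    unfolding unary_FA_presentable_def
  proof (intro exI[of _ ?L] exI[of _ "unary_decode n"] conjI allI impI ballI)
    show "set w \<subseteq> {A}" if "w \<in> ?L" for w
      using that by auto
    show "regular ?L" "regular {conv [w1, w2] | w1 w2. w1 \<in> ?L \<and> w2 \<in> ?L \<and>
        unary_decode n w1 = unary_decode n w2}"
      unfolding conv_unary_eq_pairs by (rule regular_range_replicate)+
    show "unary_decode n ` ?L = disj_union_univ UNIV (\<lambda>_. {..<n})"
      using unary_decode_image[OF \<open>n > 0\<close>] by (simp add: disj_union_univ_def)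
    fix k assume "k < length ar"
    have rel: "disj_union_rels UNIV (length ar) (\<lambda>_. Ts) ! k =
        {t. \<exists>q. (\<forall>y\<in>set t. fst y = q) \<and> map snd t \<in> Ts ! k}"
      using \<open>k < length ar\<close> by (simp add: disj_union_rels_def)
    have "finite {p \<in> Ts ! k. length p = ar ! k \<and> set p \<subseteq> {..<n}}"
      by (rule finite_subset[OF _ finite_lists_length_eq[of "{..<n}" "ar ! k"]]) auto
    then show "regular {conv ws | ws. length ws = ar ! k \<and> set ws \<subseteq> ?L \<and>
        map (unary_decode n) ws \<in> disj_union_rels UNIV (length ar) (\<lambda>_. Ts) ! k}"
      unfolding rel conv_unary_copies_rel[OF \<open>n > 0\<close>]
      using \<open>n > 0\<close> by (intro regular_conv_blocks) auto
  qed
qed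

lemma rel_iso_inv_into:
  assumes "rel_iso f S Rs S' Rs'"
  shows "rel_iso (inv_into S f) S' Rs' S Rs"
proof -
  have bij: "bij_betw f S S'"
    using assms by (simp add: rel_iso_def)
  have "t \<in> Rs' ! k \<longleftrightarrow> map (inv_into S f) t \<in> Rs ! k"
    if "k < length Rs'" "set t \<subseteq> S'" for k t
  proof -
    have "set (map (inv_into S f) t) \<subseteq> S"
      using that(2) bij by (auto simp: bij_betw_def intro: inv_into_into)
    moreover have "map f (map (inv_into S f) t) = t"
      using that(2) bij by (auto simp: bij_betw_def f_inv_into_f intro!: map_idI)
    ultimately show ?thesis
      using assms that(1) by (metis rel_iso_def)
  qed
  then show ?thesis
    using assms bij_betw_inv_into by (auto simp: rel_iso_def)
qed

lemma rel_iso_comp: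
  assumes "rel_iso f S Rs S' Rs'" "rel_iso g S' Rs' S'' Rs''"
  shows "rel_iso (g \<circ> f) S Rs S'' Rs''"
proof -
  have "set (map f t) \<subseteq> S'" if "set t \<subseteq> S" for t
    using that assms(1) by (auto simp: rel_iso_def bij_betw_def)
  then show ?thesis
    using assms by (auto simp: rel_iso_def bij_betw_trans)
qed

lemma rel_iso_pullback:
  assumes "bij_betw f S0 S"
  shows "rel_iso f S0 (map (\<lambda>R. {t. set t \<subseteq> S0 \<and> map f t \<in> R}) Rs) S Rs"
  using assms by (simp add: rel_iso_def)

lemma bij_betw_Sigma:
  assumes "bij_betw h J I" "\<And>j. j \<in> J \<Longrightarrow> bij_betw (f j) (S' j) (S (h j))"
  shows "bij_betw (\<lambda>(j, x). (h j, f j x)) (Sigma J S') (Sigma I S)"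
  unfolding bij_betw_def
proof
  show "inj_on (\<lambda>(j, x). (h j, f j x)) (Sigma J S')"
  proof (rule inj_onI, clarify)
    fix j x j' x'
    assume "j \<in> J" "x \<in> S' j" "j' \<in> J" "x' \<in> S' j'" "h j = h j'" "f j x = f j' x'"
    moreover from this have "j = j'"
      using assms(1) by (auto simp: bij_betw_def dest: inj_onD)
    ultimately show "j = j' \<and> x = x'"
      using assms(2) by (auto simp: bij_betw_def dest: inj_onD)
  qed
  show "(\<lambda>(j, x). (h j, f j x)) ` Sigma J S' = Sigma I S"
  proof
    show "(\<lambda>(j, x). (h j, f j x)) ` Sigma J S' \<subseteq> Sigma I S"
      using bij_betw_apply[OF assms(1)] bij_betw_apply[OF assms(2)] by auto
    show "Sigma I S \<subseteq> (\<lambda>(j, x). (h j, f j x)) ` Sigma J S'"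
    proof clarify
      fix i y assume "i \<in> I" "y \<in> S i"
      then obtain j where "j \<in> J" "i = h j"
        using assms(1) by (auto simp: bij_betw_def)
      moreover with \<open>y \<in> S i\<close> obtain x where "x \<in> S' j" "y = f j x"
        using assms(2) by (auto simp: bij_betw_def)
      ultimately show "(i, y) \<in> (\<lambda>(j, x). (h j, f j x)) ` Sigma J S'"
        by force
    qed
  qed
qed

lemma rel_iso_tagged_tuple_iff:
  assumes "inj_on h J" "j \<in> J" "set t \<subseteq> Sigma J S'"
    and "rel_iso (f j) (S' j) (R' j) (S (h j)) (R (h j))" "k < length (R' j)"
  shows "(\<forall>y\<in>set (map (\<lambda>(j, x). (h j, f j x)) t). fst y = h j) \<and>
      map snd (map (\<lambda>(j, x). (h j, f j x)) t) \<in> R (h j) ! k \<longleftrightarrow>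
    (\<forall>x\<in>set t. fst x = j) \<and> map snd t \<in> R' j ! k"
proof (cases "\<forall>x\<in>set t. fst x = j")
  case True
  then have snd_map: "map snd (map (\<lambda>(j, x). (h j, f j x)) t) = map (f j) (map snd t)"
    by (auto intro!: map_cong)
  have "set (map snd t) \<subseteq> S' j"
    using True assms(3) by fastforce
  then have "map snd t \<in> R' j ! k \<longleftrightarrow> map (f j) (map snd t) \<in> R (h j) ! k"
    using assms(4,5) by (simp add: rel_iso_def)
  with True show ?thesis
    unfolding snd_map by auto
next
  case False
  then obtain x where "x \<in> set t" "fst x \<noteq> j"
    by blast
  moreover have "fst x \<in> J"
    using \<open>x \<in> set t\<close> assms(3) by auto
  ultimately have "fst ((\<lambda>(j, x). (h j, f j x)) x) \<noteq> h j"
    using assms(1,2) by (auto simp: case_prod_beta dest: inj_onD)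
  then have "\<not> (\<forall>y\<in>set (map (\<lambda>(j, x). (h j, f j x)) t). fst y = h j)"
    using \<open>x \<in> set t\<close> by auto
  with False show ?thesis
    by blast
qed

lemma rel_iso_disj_union:
  assumes "bij_betw h J I"
    and iso: "\<And>j. j \<in> J \<Longrightarrow> rel_iso (f j) (S' j) (R' j) (S (h j)) (R (h j))"
    and "\<And>j. j \<in> J \<Longrightarrow> m \<le> length (R' j)"
  shows "rel_iso (\<lambda>(j, x). (h j, f j x))
    (disj_union_univ J S') (disj_union_rels J m R') (disj_union_univ I S) (disj_union_rels I m R)"
proof -
  let ?\<Phi> = "\<lambda>(j, x). (h j, f j x)"
  have bij: "bij_betw ?\<Phi> (Sigma J S') (Sigma I S)"
    using iso by (intro bij_betw_Sigma[OF assms(1)]) (simp add: rel_iso_def)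
  have "t \<in> disj_union_rels J m R' ! k \<longleftrightarrow> map ?\<Phi> t \<in> disj_union_rels I m R ! k"
    if "k < m" "set t \<subseteq> Sigma J S'" for k t
  proof -
    have "(\<forall>y\<in>set (map ?\<Phi> t). fst y = h j) \<and> map snd (map ?\<Phi> t) \<in> R (h j) ! k \<longleftrightarrow>
        (\<forall>x\<in>set t. fst x = j) \<and> map snd t \<in> R' j ! k" if "j \<in> J" for j
      using assms(1) \<open>set t \<subseteq> Sigma J S'\<close> iso[OF that] less_le_trans[OF \<open>k < m\<close> assms(3)[OF that]]
      by (intro rel_iso_tagged_tuple_iff[where h = h and f = f and S' = S' and R' = R' and J = J])
        (auto simp: bij_betw_def that)
    moreover have "I = h ` J"
      using assms(1) by (simp add: bij_betw_def)
    ultimately show ?thesis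
      using \<open>k < m\<close> by (auto simp: disj_union_rels_def)
  qed
  then show ?thesis
    using bij by (simp add: rel_iso_def disj_union_univ_def disj_union_rels_def)
qed

lemma unary_FA_presentable_rel_iso:
  assumes "unary_FA_presentable S ar Rs" "rel_iso f S Rs S' Rs'" "length Rs = length ar"
  shows "unary_FA_presentable S' ar Rs'"
proof -
  obtain L and \<phi> :: "sym list \<Rightarrow> 'a" where
    L: "\<forall>w\<in>L. set w \<subseteq> {A}" "regular L" and \<phi>: "\<phi> ` L = S"
    and eq: "regular {conv [w1, w2] | w1 w2. w1 \<in> L \<and> w2 \<in> L \<and> \<phi> w1 = \<phi> w2}"
    and rels: "\<And>k. k < length ar \<Longrightarrow>
      regular {conv ws | ws. length ws = ar ! k \<and> set ws \<subseteq> L \<and> map \<phi> ws \<in> Rs ! k}"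
    using assms(1) unfolding unary_FA_presentable_def by blast
  have bij: "bij_betw f S S'"
    using assms(2) by (simp add: rel_iso_def)
  have "f (\<phi> w1) = f (\<phi> w2) \<longleftrightarrow> \<phi> w1 = \<phi> w2" if "w1 \<in> L" "w2 \<in> L" for w1 w2
    using that \<phi> bij by (auto simp: bij_betw_def dest: inj_onD)
  then have "{conv [w1, w2] | w1 w2. w1 \<in> L \<and> w2 \<in> L \<and> (f \<circ> \<phi>) w1 = (f \<circ> \<phi>) w2} =
      {conv [w1, w2] | w1 w2. w1 \<in> L \<and> w2 \<in> L \<and> \<phi> w1 = \<phi> w2}"
    by auto
  moreover have "{conv ws | ws. length ws = ar ! k \<and> set ws \<subseteq> L \<and> map (f \<circ> \<phi>) ws \<in> Rs' ! k} =
      {conv ws | ws. length ws = ar ! k \<and> set ws \<subseteq> L \<and> map \<phi> ws \<in> Rs ! k}"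
    if "k < length ar" for k
  proof -
    have "map \<phi> ws \<in> Rs ! k \<longleftrightarrow> map (f \<circ> \<phi>) ws \<in> Rs' ! k" if "set ws \<subseteq> L" for ws
    proof -
      have "set (map \<phi> ws) \<subseteq> S"
        using that \<phi> by auto
      then show ?thesis
        using assms(2,3) \<open>k < length ar\<close> unfolding rel_iso_def map_map[symmetric] by metis
    qed
    then show ?thesis
      by auto
  qed
  moreover have "(f \<circ> \<phi>) ` L = S'"
    using \<phi> bij_betw_imp_surj_on[OF bij] by (metis image_comp)
  ultimately show ?thesis
    unfolding unary_FA_presentable_def using L eq rels by (intro exI[of _ L] exI[of _ "f \<circ> \<phi>"]) auto
qed

theorem lemma2p9:
  fixes S :: "'u set" and ar :: "nat list" and Rs :: "'u list set list"
    and I :: "'i set" and Si :: "'i \<Rightarrow> 'v set" and Rsi :: "'i \<Rightarrow> 'v list set list"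
  assumes "finite S"
    and "rel_structure S ar Rs"
    and "countable I" and "infinite I"
    and "\<forall>i\<in>I. rel_structure (Si i) ar (Rsi i)"
    and "\<forall>i\<in>I. \<exists>f. rel_iso f (Si i) (Rsi i) S Rs"
  shows "unary_FA_presentable (disj_union_univ I Si) ar (disj_union_rels I (length ar) Rsi)"
proof -
  obtain enum where enum: "bij_betw enum {..<card S} S"
    using ex_bij_betw_nat_finite[OF assms(1)] by (auto simp: atLeast0LessThan)
  have index: "bij_betw (from_nat_into I) UNIV I"
    using assms(3,4) by (rule bij_betw_from_nat_into)
  obtain F where F: "\<And>i. i \<in> I \<Longrightarrow> rel_iso (F i) (Si i) (Rsi i) S Rs"
    using assms(6) by metis
  define Ts where "Ts = map (\<lambda>R. {t. set t \<subseteq> {..<card S} \<and> map enum t \<in> R}) Rs"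
  have "length Rs = length ar"
    using assms(2) by (simp add: rel_structure_def)
  define copy where "copy i = inv_into (Si i) (F i) \<circ> enum" for i
  have "rel_iso (copy i) {..<card S} Ts (Si i) (Rsi i)" if "i \<in> I" for i
    unfolding Ts_def copy_def
    by (rule rel_iso_comp[OF rel_iso_pullback[OF enum] rel_iso_inv_into[OF F[OF that]]])
  then have "rel_iso (\<lambda>(q, x). (from_nat_into I q, copy (from_nat_into I q) x))
      (disj_union_univ UNIV (\<lambda>_. {..<card S})) (disj_union_rels UNIV (length ar) (\<lambda>_. Ts))
      (disj_union_univ I Si) (disj_union_rels I (length ar) Rsi)"
    using bij_betw_apply[OF index] \<open>length Rs = length ar\<close>
    by (intro rel_iso_disj_union[OF index, where f = "\<lambda>q. copy (from_nat_into I q)"])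
      (simp_all add: Ts_def)
  then show ?thesis
    by (rule unary_FA_presentable_rel_iso[OF unary_FA_presentable_copies])
      (simp add: disj_union_rels_def)
qed

end
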